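(* For a fixed $x\in(0,1)$, the function $g(k)=(\cos kx+\sin kx)^{1/k}$ is decreasing on $(0,1)$. *)

theory Defs
  imports "HOL-Analysis.Analysis"
begin

end

theory Submission
  imports Defs
begin

text \<open>
  With \<open>\<phi> t = ln (cos t + sin t)\<close> we have \<open>g k = exp (\<phi> (k x) / k) = exp (x \<cdot> \<phi> (k x) / (k x))\<close>,
  so it suffices that \<open>\<phi> t / t\<close> decreases strictly on \<open>(0, 1]\<close>. Since \<open>\<phi> 0 = 0\<close>, this follows
  from the strict decrease of \<open>\<phi>' t = (cos t - sin t) / (cos t + sin t)\<close>: by the mean value
  theorem \<open>\<phi> t / t\<close> is an average of \<open>\<phi>'\<close> over \<open>[0, t]\<close>.
\<close>

lemma strict_antimono_on_divide_self:
  fixes f f' :: "real \<Rightarrow> real"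
  assumes "f 0 = 0"
    and deriv: "\<And>t. 0 \<le> t \<Longrightarrow> t \<le> b \<Longrightarrow> (f has_real_derivative f' t) (at t)"
    and "strict_antimono_on {0..b} f'"
  shows "strict_antimono_on {0<..b} (\<lambda>t. f t / t)"
proof (rule monotone_onI)
  fix a c assume "a \<in> {0<..b}" "c \<in> {0<..b}" "a < c"
  then have a: "0 < a" "a < c" "c \<le> b" by auto
  obtain z1 where z1: "0 < z1" "z1 < a" "f a - f 0 = (a - 0) * f' z1"
    using MVT2[of 0 a f f'] deriv a by auto
  obtain z2 where z2: "a < z2" "z2 < c" "f c - f a = (c - a) * f' z2"
    using MVT2[of a c f f'] deriv a by auto
  have "f' z2 < f' z1"
    using z1 z2 a by (intro monotone_onD[OF assms(3)]) auto
  have fa: "f a = a * f' z1" and fc: "f c = f a + (c - a) * f' z2"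
    using z1(3) z2(3) \<open>f 0 = 0\<close> by simp_all
  have "c * f a - a * f c = (c - a) * a * (f' z1 - f' z2)"
    unfolding fc fa by (simp add: algebra_simps)
  also have "\<dots> > 0"
    using \<open>f' z2 < f' z1\<close> a by simp
  finally show "f c / c < f a / a"
    using a by (simp add: divide_less_eq less_divide_eq mult.commute)
qed

lemma cos_plus_sin_pos:
  fixes t :: real
  assumes "0 \<le> t" "t < pi / 2"
  shows "cos t + sin t > 0"
proof -
  have "cos t > 0" using assms by (intro cos_gt_zero_pi) auto
  moreover have "sin t \<ge> 0" using assms by (intro sin_ge_zero) auto
  ultimately show ?thesis by simp
qed

lemma has_real_derivative_ln_cos_plus_sin:
  fixes t :: real
  assumes "cos t + sin t > 0"
  shows "((\<lambda>t. ln (cos t + sin t)) has_real_derivative (cos t - sin t) / (cos t + sin t)) (at t)"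
proof -
  have "((\<lambda>t. cos t + sin t) has_real_derivative - sin t + cos t) (at t)"
    by (intro DERIV_add DERIV_cos DERIV_sin)
  from DERIV_chain2[OF DERIV_ln_divide[OF assms] this] show ?thesis
    by simp
qed

text \<open>The quotient is \<open>tan (pi / 4 - t)\<close>; cross-multiplying reduces its decrease to \<open>sin (t\<^sub>2 - t\<^sub>1) > 0\<close>.\<close>

lemma strict_antimono_on_cos_minus_sin_divide:
  "strict_antimono_on {0..<pi / 2} (\<lambda>t::real. (cos t - sin t) / (cos t + sin t))"
proof (rule monotone_onI)
  fix t1 t2 :: real assume "t1 \<in> {0..<pi / 2}" "t2 \<in> {0..<pi / 2}" "t1 < t2"
  then have t: "0 \<le> t1" "t1 < t2" "t2 < pi / 2" by auto
  have pos: "cos t1 + sin t1 > 0" "cos t2 + sin t2 > 0"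
    using cos_plus_sin_pos t by auto
  have "sin (t2 - t1) > 0"
    using t by (intro sin_gt_zero) auto
  then have "(cos t2 - sin t2) * (cos t1 + sin t1) < (cos t1 - sin t1) * (cos t2 + sin t2)"
    unfolding sin_diff by (simp add: algebra_simps)
  then show "(cos t2 - sin t2) / (cos t2 + sin t2) < (cos t1 - sin t1) / (cos t1 + sin t1)"
    using pos by (simp add: divide_less_eq less_divide_eq mult.commute)
qed

lemma strict_antimono_on_ln_cos_plus_sin_divide_self:
  "strict_antimono_on {0<..1} (\<lambda>t::real. ln (cos t + sin t) / t)"
proof (rule strict_antimono_on_divide_self)
  have "1 < pi / 2" using pi_gt3 by linarith
  show "strict_antimono_on {0..1} (\<lambda>t::real. (cos t - sin t) / (cos t + sin t))"
    by (rule monotone_on_subset[OF strict_antimono_on_cos_minus_sin_divide])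
      (use \<open>1 < pi / 2\<close> in auto)
  fix t :: real assume "0 \<le> t" "t \<le> 1"
  with \<open>1 < pi / 2\<close> show "((\<lambda>t. ln (cos t + sin t)) has_real_derivative
      (cos t - sin t) / (cos t + sin t)) (at t)"
    by (intro has_real_derivative_ln_cos_plus_sin cos_plus_sin_pos) auto
qed simp

theorem lemma4p13:
  fixes x :: real
  assumes "0 < x" and "x < 1"
  shows "strict_antimono_on {0<..<1} (\<lambda>k::real. (cos (k * x) + sin (k * x)) powr (1 / k))"
proof (rule monotone_onI)
  fix k1 k2 :: real assume k: "k1 \<in> {0<..<1}" "k2 \<in> {0<..<1}" "k1 < k2"
  then have "k1 * x \<in> {0<..1}" "k2 * x \<in> {0<..1}" "k1 * x < k2 * x"
    using assms by (auto simp: mult_le_one)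
  then have "ln (cos (k2 * x) + sin (k2 * x)) / (k2 * x) < ln (cos (k1 * x) + sin (k1 * x)) / (k1 * x)"
    by (rule monotone_onD[OF strict_antimono_on_ln_cos_plus_sin_divide_self])
  then have "x * (ln (cos (k2 * x) + sin (k2 * x)) / (k2 * x))
      < x * (ln (cos (k1 * x) + sin (k1 * x)) / (k1 * x))"
    using \<open>0 < x\<close> by (rule mult_strict_left_mono)
  then have "ln (cos (k2 * x) + sin (k2 * x)) / k2 < ln (cos (k1 * x) + sin (k1 * x)) / k1"
    using \<open>0 < x\<close> by simp
  moreover have pos: "cos (k * x) + sin (k * x) > 0" if "k \<in> {0<..<1}" for k
    using that assms pi_gt3 mult_strict_mono[of k 1 x 1] by (intro cos_plus_sin_pos) auto
  note pos[OF k(1)] pos[OF k(2)]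
  ultimately show "(cos (k2 * x) + sin (k2 * x)) powr (1 / k2) < (cos (k1 * x) + sin (k1 * x)) powr (1 / k1)"
    by (simp add: powr_def)
qed

end
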